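(* Let $\varphi\colon\mathcal{M}\to\mathcal{X}$ be a smooth lift and let $y\in\mathcal{M}$. Then $\varphi$ satisfies the "local $\Rightarrow$ local" property at $y$ if and only if $\varphi$ is open at $y$. Moreover, if $\varphi$ does not satisfy "local $\Rightarrow$ local" at $y$, then there is a smooth cost $f$ such that $y$ is a local minimum of $g=f\circ\varphi$ on $\mathcal{M}$ but $\varphi(y)$ is not a local minimum of $f$ on $\mathcal{X}$.
   Context: Let $\mathcal{E}$ be a finite-dimensional real inner product space and $\mathcal{M}$ a smooth manifold. A smooth lift of a set $\mathcal{X}\subseteq\mathcal{E}$ is a smooth map $\varphi\colon\mathcal{M}\to\mathcal{E}$ with $\varphi(\mathcal{M})=\mathcal{X}$. $\mathcal{X}$ carries the subspace topology from $\mathcal{E}$. For a cost $f$ on $\mathcal{X}$ put $g=f\circ\varphi$; local minima of $f$ on $\mathcal{X}$ (resp. of $g$ on $\mathcal{M}$) are points minimizing the function over some neighborhood in $\mathcal{X}$ (resp. $\mathcal{M}$). The lift satisfies "local $\Rightarrow$ local" at $y$ if for every continuous $f\colon\mathcal{X}\to\mathbb{R}$, whenever $y$ is a local minimum of $g$ on $\mathcal{M}$, $\varphi(y)$ is a local minimum of $f$ on $\mathcal{X}$. The map $\varphi$ is open at $y$ if it maps every neighborhood of $y$ in $\mathcal{M}$ to a neighborhood of $\varphi(y)$ in $\mathcal{X}$ (a neighborhood of a point is a set containing it in its interior). *)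

theory Defs
  imports "HOL-Analysis.Analysis"
begin

primrec iter_deriv :: "'a::real_normed_vector list \<Rightarrow> ('a \<Rightarrow> 'b::real_normed_vector) \<Rightarrow> 'a \<Rightarrow> 'b" where
  "iter_deriv [] f = f"
| "iter_deriv (v # vs) f = (\<lambda>x. frechet_derivative (iter_deriv vs f) (at x) v)"

definition smooth_on :: "'a::euclidean_space set \<Rightarrow> ('a \<Rightarrow> 'b::real_normed_vector) \<Rightarrow> bool" where
  "smooth_on S f \<longleftrightarrow> open S \<and>
     (\<forall>vs. set vs \<subseteq> Basis \<longrightarrow> iter_deriv vs f differentiable_on S)"

definition smooth_atlas :: "('m::topological_space set \<times> ('m \<Rightarrow> 'a::euclidean_space)) set \<Rightarrow> bool" where
  "smooth_atlas A \<longleftrightarrow>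
     (\<forall>(U, \<psi>)\<in>A. open U \<and> open (\<psi> ` U) \<and> inj_on \<psi> U \<and> continuous_on U \<psi>
                   \<and> continuous_on (\<psi> ` U) (inv_into U \<psi>)) \<and>
     (\<Union>(fst ` A) = UNIV) \<and>
     (\<forall>(U, \<psi>)\<in>A. \<forall>(V, \<theta>)\<in>A. smooth_on (\<psi> ` (U \<inter> V)) (\<theta> \<circ> inv_into U \<psi>))"

definition smooth_map :: "('m::topological_space set \<times> ('m \<Rightarrow> 'a::euclidean_space)) set \<Rightarrow> ('m \<Rightarrow> 'e::euclidean_space) \<Rightarrow> bool" where
  "smooth_map A \<phi> \<longleftrightarrow> (\<forall>(U, \<psi>)\<in>A. smooth_on (\<psi> ` U) (\<phi> \<circ> inv_into U \<psi>))"

definition local_min_M :: "('m::topological_space \<Rightarrow> real) \<Rightarrow> 'm \<Rightarrow> bool" where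
  "local_min_M g y \<longleftrightarrow> (\<exists>U. open U \<and> y \<in> U \<and> (\<forall>z\<in>U. g y \<le> g z))"

definition local_min_on :: "'e::topological_space set \<Rightarrow> ('e \<Rightarrow> real) \<Rightarrow> 'e \<Rightarrow> bool" where
  "local_min_on X f x \<longleftrightarrow> x \<in> X \<and> (\<exists>V. open V \<and> x \<in> V \<and> (\<forall>z\<in>X \<inter> V. f x \<le> f z))"

definition local_to_local :: "('m::topological_space \<Rightarrow> 'e::topological_space) \<Rightarrow> 'm \<Rightarrow> bool" where
  "local_to_local \<phi> y \<longleftrightarrow>
     (\<forall>f :: 'e \<Rightarrow> real. continuous_on (range \<phi>) f \<longrightarrow>
        local_min_M (f \<circ> \<phi>) y \<longrightarrow> local_min_on (range \<phi>) f (\<phi> y))"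

definition open_at :: "('m::topological_space \<Rightarrow> 'e::topological_space) \<Rightarrow> 'm \<Rightarrow> bool" where
  "open_at \<phi> y \<longleftrightarrow>
     (\<forall>N. (\<exists>U. open U \<and> y \<in> U \<and> U \<subseteq> N) \<longrightarrow>
          (\<exists>V. open V \<and> \<phi> y \<in> V \<and> V \<inter> range \<phi> \<subseteq> \<phi> ` N))"

end

theory Submission
  imports Defs
begin

(* If phi is open at y, a neighbourhood of y on which f o phi is minimal at y is mapped onto a
   neighbourhood of phi y in X on which f is minimal at phi y.
   Conversely, if phi is not open at y, there is an open neighbourhood U of y such that phi y is a
   limit of points x k of X outside phi U. Charts make the manifold locally compact, so U contains
   a compact neighbourhood K of y, and phi K is compact and misses every x k. A smooth f that
   vanishes on phi K and is negative at every x k has a local minimum at y along phi, but not at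
   phi y on X. It is built as a series of nonpositive bumps -exp (-1 / (r^2 - |z - x k|^2))
   supported in balls around the x k that miss phi K, with weights so small that all derivatives
   of order at most k of the k-th term are bounded by 2^-k; then every derivative series
   converges uniformly. *)

lemma has_derivative_basis_expansion:
  fixes f :: "'a::euclidean_space \<Rightarrow> real"
  assumes "f differentiable (at x)"
  shows "(f has_derivative (\<lambda>h. \<Sum>i\<in>Basis. (h \<bullet> i) * frechet_derivative f (at x) i)) (at x)"
proof -
  let ?D = "frechet_derivative f (at x)"
  have D: "(f has_derivative ?D) (at x)"
    using assms by (simp add: frechet_derivative_works)
  have "?D h = (\<Sum>i\<in>Basis. (h \<bullet> i) * ?D i)" for h
  proof -
    have "?D h = ?D (\<Sum>i\<in>Basis. (h \<bullet> i) *\<^sub>R i)" by (simp add: euclidean_representation)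
    also have "\<dots> = (\<Sum>i\<in>Basis. (h \<bullet> i) * ?D i)"
      using has_derivative_linear[OF D] by (simp add: linear_sum linear_scale)
    finally show ?thesis .
  qed
  with D show ?thesis by (metis (no_types, lifting) ext)
qed

lemma abs_sum_Basis_inner_mult_le:
  fixes d :: "'a::euclidean_space \<Rightarrow> real" and B :: real
  assumes "\<forall>i\<in>Basis. \<bar>d i\<bar> \<le> B"
  shows "\<bar>\<Sum>i\<in>Basis. (h \<bullet> i) * d i\<bar> \<le> DIM('a) * B * norm h"
proof -
  have "\<bar>(h \<bullet> i) * d i\<bar> \<le> norm h * B" if "i \<in> Basis" for i
    using assms that Basis_le_norm[OF that, of h] by (simp add: abs_mult mult_mono')
  then have "\<bar>\<Sum>i\<in>Basis. (h \<bullet> i) * d i\<bar> \<le> (\<Sum>i\<in>(Basis::'a set). norm h * B)"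
    by (intro order_trans[OF sum_abs] sum_mono) auto
  then show ?thesis by (simp add: mult_ac)
qed

lemma iter_deriv_eq_0_on_open:
  assumes "open S" "\<forall>z\<in>S. f z = 0" "x \<in> S"
  shows "iter_deriv vs f x = 0"
  using assms(3)
proof (induction vs arbitrary: x)
  case Nil then show ?case using assms(2) by simp
next
  case (Cons v vs)
  have "(iter_deriv vs f has_derivative (\<lambda>h. 0)) (at x)"
    by (rule has_derivative_transform_within_open[OF has_derivative_const assms(1) Cons.prems])
       (use Cons.IH in auto)
  then show ?case by (simp add: frechet_derivative_at[symmetric])
qed

lemma smooth_on_imp_continuous_on: "smooth_on S f \<Longrightarrow> continuous_on S f"
proof -
  assume "smooth_on S f"
  then have "iter_deriv [] f differentiable_on S" unfolding smooth_on_def by (metis empty_subsetI set_empty)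
  then show ?thesis by (simp add: differentiable_imp_continuous_on)
qed

lemma summable_and_tail_le_half_pow:
  fixes c :: "nat \<Rightarrow> real"
  assumes bound: "\<forall>k\<ge>N. \<bar>c k\<bar> \<le> (1/2)^k" and "N \<le> n"
  shows "summable c" "\<bar>(\<Sum>k. c k) - (\<Sum>k<n. c k)\<bar> \<le> 2 * (1/2)^n"
proof -
  have geom: "summable (\<lambda>k. (1/2::real)^k)" by (rule summable_geometric) simp
  show c: "summable c" by (rule summable_comparison_test'[OF geom, of N]) (use bound in auto)
  have shifted: "\<bar>c (k + n)\<bar> \<le> (1/2)^n * (1/2)^k" for k
    using bound \<open>N \<le> n\<close> by (metis add.commute le_add2 order_trans power_add)
  have geom_n: "summable (\<lambda>k. (1/2::real)^n * (1/2)^k)" using geom by (rule summable_mult)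
  have abs_summable: "summable (\<lambda>k. norm (c (k + n)))"
    by (rule summable_comparison_test'[OF geom_n, of 0]) (use shifted in auto)
  have "(\<Sum>k. c k) - (\<Sum>k<n. c k) = (\<Sum>k. c (k + n))"
    using suminf_minus_initial_segment[OF c] by simp
  also have "\<bar>\<dots>\<bar> \<le> (\<Sum>k. norm (c (k + n)))" using summable_norm[OF abs_summable] by simp
  also have "\<dots> \<le> (\<Sum>k. (1/2::real)^n * (1/2)^k)"
    by (rule suminf_le) (use shifted abs_summable geom_n in auto)
  also have "\<dots> = 2 * (1/2)^n"
    using suminf_mult[OF geom, of "(1/2)^n"] suminf_geometric[of "1/2::real"] by simp
  finally show "\<bar>(\<Sum>k. c k) - (\<Sum>k<n. c k)\<bar> \<le> 2 * (1/2)^n" .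
qed

section \<open>Flat functions and an algebra of smooth functions\<close>

(* The classical flat function exp (-1/t), divided by t^n; with the extra index the family is
   closed under differentiation. *)
definition psi :: "nat \<Rightarrow> real \<Rightarrow> real" where
  "psi n t = (if t > 0 then exp (- 1 / t) * inverse t ^ n else 0)"

lemma psi_has_derivative_0: "(psi n has_real_derivative 0) (at 0)"
proof -
  have "((\<lambda>s::real. s ^ (n + 1) / exp s) \<longlongrightarrow> 0) at_top"
    by (rule tendsto_power_div_exp_0)
  then have "((\<lambda>t::real. inverse t ^ (n + 1) / exp (inverse t)) \<longlongrightarrow> 0) (at_right 0)"
    by (rule filterlim_compose[OF _ filterlim_inverse_at_top_right])
  then have right: "((\<lambda>t. (psi n t - psi n 0) / (t - 0)) \<longlongrightarrow> 0) (at_right 0)"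
  proof (rule Lim_transform_eventually)
    show "\<forall>\<^sub>F t in at_right 0. inverse t ^ (n + 1) / exp (inverse t) = (psi n t - psi n 0) / (t - 0)"
      using eventually_at_right_less[of 0] by eventually_elim (simp add: psi_def exp_minus field_simps)
  qed
  have "((\<lambda>t. (psi n t - psi n 0) / (t - 0)) \<longlongrightarrow> 0) (at_left 0)"
    by (rule Lim_transform_eventually[OF tendsto_const])
      (auto simp: psi_def eventually_at_filter intro: always_eventually)
  with right show ?thesis
    by (simp add: has_field_derivative_iff filterlim_at_split)
qed

lemma psi_has_derivative_pos:
  assumes "t > 0"
  shows "(psi n has_real_derivative (psi (n + 2) t - real n * psi (n + 1) t)) (at t)"
proof -
  have "((\<lambda>t. exp (- 1 / t)) has_real_derivative exp (- 1 / t) * inverse t ^ 2) (at t)"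
    using assms by (auto intro!: derivative_eq_intros simp: power2_eq_square divide_inverse)
  moreover have "((\<lambda>t. inverse t ^ n) has_real_derivative - real n * inverse t ^ (n + 1)) (at t)"
  proof -
    have "((\<lambda>t. inverse t ^ n) has_real_derivative real n * inverse t ^ (n - 1) * - (inverse t ^ 2)) (at t)"
      using assms by (auto intro!: derivative_eq_intros simp: power2_eq_square)
    moreover have "real n * inverse t ^ (n - 1) * - (inverse t ^ 2) = - real n * inverse t ^ (n + 1)"
      by (cases n) (simp_all add: power2_eq_square algebra_simps)
    ultimately show ?thesis by (rule DERIV_cong)
  qed
  ultimately have "((\<lambda>t. exp (- 1 / t) * inverse t ^ n) has_real_derivative
      exp (- 1 / t) * inverse t ^ 2 * inverse t ^ n + - real n * inverse t ^ (n + 1) * exp (- 1 / t)) (at t)"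
    by (rule DERIV_mult)
  then have "((\<lambda>t. exp (- 1 / t) * inverse t ^ n) has_real_derivative
      (psi (n + 2) t - real n * psi (n + 1) t)) (at t)"
    by (rule DERIV_cong) (use assms in \<open>simp add: psi_def power_add power2_eq_square algebra_simps\<close>)
  then show ?thesis
    by (rule has_field_derivative_transform_within_open[of _ _ _ "{0<..}"])
      (use assms in \<open>auto simp: psi_def\<close>)
qed

lemma psi_has_derivative: "(psi n has_real_derivative (psi (n + 2) t - real n * psi (n + 1) t)) (at t)"
proof -
  consider "t > 0" | "t = 0" | "t < 0" by linarith
  then show ?thesis
  proof cases
    case 1
    then show ?thesis by (rule psi_has_derivative_pos)
  next
    case 2
    then show ?thesis using psi_has_derivative_0[of n] by (simp add: psi_def)
  next
    case 3
    have "((\<lambda>_. 0) has_real_derivative 0) (at t)" by simp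
    then have "(psi n has_real_derivative 0) (at t)"
      by (rule has_field_derivative_transform_within_open[of _ _ _ "{..<0}"])
        (use 3 in \<open>auto simp: psi_def\<close>)
    then show ?thesis using 3 by (simp add: psi_def)
  qed
qed

(* Closure under directional derivatives is proved once for this class; its members then have
   everywhere differentiable iterated derivatives of every order. *)
inductive_set psi_algebra :: "('a::euclidean_space \<Rightarrow> real) set" where
  const: "(\<lambda>x. c) \<in> psi_algebra"
| inner: "(\<lambda>x. x \<bullet> v) \<in> psi_algebra"
| inner_self: "(\<lambda>x. x \<bullet> x) \<in> psi_algebra"
| add: "f \<in> psi_algebra \<Longrightarrow> g \<in> psi_algebra \<Longrightarrow> (\<lambda>x. f x + g x) \<in> psi_algebra"
| mult: "f \<in> psi_algebra \<Longrightarrow> g \<in> psi_algebra \<Longrightarrow> (\<lambda>x. f x * g x) \<in> psi_algebra"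
| psi: "g \<in> psi_algebra \<Longrightarrow> (\<lambda>x. psi n (g x)) \<in> psi_algebra"

lemma psi_algebra_has_derivative:
  assumes "g \<in> psi_algebra"
  shows "\<exists>D. (\<forall>x. (g has_derivative D x) (at x)) \<and> (\<forall>v. (\<lambda>x. D x v) \<in> psi_algebra)"
  using assms
proof induction
  case (const c)
  show ?case by (rule exI[of _ "\<lambda>x h. 0"]) (auto intro: psi_algebra.const)
next
  case (inner v)
  show ?case
    by (rule exI[of _ "\<lambda>x h. h \<bullet> v"]) (auto intro!: derivative_eq_intros intro: psi_algebra.const)
next
  case inner_self
  have "(\<lambda>x. x \<bullet> v + x \<bullet> v) \<in> psi_algebra" for v :: 'a
    by (intro psi_algebra.add psi_algebra.inner)
  then show ?case
    by (intro exI[of _ "\<lambda>x h. x \<bullet> h + h \<bullet> x"]) (auto intro!: derivative_eq_intros simp: inner_commute)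
next
  case (add f g)
  then obtain Df Dg where "\<forall>x. (f has_derivative Df x) (at x)" "\<forall>v. (\<lambda>x. Df x v) \<in> psi_algebra"
    and "\<forall>x. (g has_derivative Dg x) (at x)" "\<forall>v. (\<lambda>x. Dg x v) \<in> psi_algebra" by blast
  then show ?case
    by (intro exI[of _ "\<lambda>x h. Df x h + Dg x h"]) (auto intro!: derivative_eq_intros psi_algebra.add)
next
  case (mult f g)
  then obtain Df Dg where "\<forall>x. (f has_derivative Df x) (at x)" "\<forall>v. (\<lambda>x. Df x v) \<in> psi_algebra"
    and "\<forall>x. (g has_derivative Dg x) (at x)" "\<forall>v. (\<lambda>x. Dg x v) \<in> psi_algebra" by blast
  with mult.hyps show ?case
    by (intro exI[of _ "\<lambda>x h. f x * Dg x h + Df x h * g x"])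
       (auto intro!: has_derivative_mult psi_algebra.add psi_algebra.mult)
next
  case (psi g n)
  then obtain Dg where Dg: "\<forall>x. (g has_derivative Dg x) (at x)" "\<forall>v. (\<lambda>x. Dg x v) \<in> psi_algebra"
    by blast
  define P where "P u = psi (n + 2) u - real n * psi (n + 1) u" for u
  have psi_deriv: "(psi n has_derivative (\<lambda>h. P u * h)) (at u)" for u
    using psi_has_derivative[of n u] by (simp add: has_field_derivative_def P_def)
  have P: "(\<lambda>x. P (g x)) \<in> psi_algebra"
  proof -
    have "(\<lambda>x. psi (n + 2) (g x) + (- real n) * psi (n + 1) (g x)) \<in> psi_algebra"
      by (intro psi_algebra.add psi_algebra.mult psi_algebra.psi psi_algebra.const psi.hyps)
    then show ?thesis by (simp add: P_def)
  qed
  show ?case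
  proof (intro exI[of _ "\<lambda>x h. P (g x) * Dg x h"] conjI allI)
    show "((\<lambda>x. psi n (g x)) has_derivative (\<lambda>h. P (g x) * Dg x h)) (at x)" for x
      using has_derivative_compose[OF Dg(1)[rule_format] psi_deriv] .
    show "(\<lambda>x. P (g x) * Dg x v) \<in> psi_algebra" for v
      using P Dg(2) by (intro psi_algebra.mult) auto
  qed
qed

lemma psi_algebra_differentiable: "g \<in> psi_algebra \<Longrightarrow> g differentiable (at x)"
  using psi_algebra_has_derivative differentiable_def by blast

lemma psi_algebra_frechet_derivative:
  assumes "g \<in> psi_algebra"
  shows "(\<lambda>x. frechet_derivative g (at x) v) \<in> psi_algebra"
proof -
  obtain D where D: "\<forall>x. (g has_derivative D x) (at x)" "\<forall>v. (\<lambda>x. D x v) \<in> psi_algebra"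
    using psi_algebra_has_derivative[OF assms] by blast
  then have "frechet_derivative g (at x) = D x" for x by (metis frechet_derivative_at)
  with D(2) show ?thesis by simp
qed

lemma psi_algebra_iter_deriv: "g \<in> psi_algebra \<Longrightarrow> iter_deriv vs g \<in> psi_algebra"
  by (induction vs) (auto intro: psi_algebra_frechet_derivative)

lemma iter_deriv_const_mult:
  assumes "g \<in> psi_algebra"
  shows "iter_deriv vs (\<lambda>x. a * g x) = (\<lambda>x. a * iter_deriv vs g x)"
proof (induction vs)
  case Nil then show ?case by simp
next
  case (Cons v vs)
  obtain D where D: "\<forall>x. (iter_deriv vs g has_derivative D x) (at x)"
    using psi_algebra_has_derivative[OF psi_algebra_iter_deriv[OF assms]] by blast
  then have "((\<lambda>x. a * iter_deriv vs g x) has_derivative (\<lambda>h. a * D x h)) (at x)" for x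
    by (auto intro!: derivative_eq_intros)
  then have "frechet_derivative (\<lambda>x. a * iter_deriv vs g x) (at x) = (\<lambda>h. a * D x h)" for x
    by (metis frechet_derivative_at)
  moreover have "frechet_derivative (iter_deriv vs g) (at x) = D x" for x
    using D by (metis frechet_derivative_at)
  ultimately show ?case using Cons.IH by simp
qed

lemma psi_algebra_iter_deriv_bounded:
  assumes "g \<in> psi_algebra" "compact K" "\<forall>x. x \<notin> K \<longrightarrow> g x = 0"
  shows "bounded (range (iter_deriv vs g))"
proof -
  have "iter_deriv vs g differentiable_on UNIV"
    using assms(1) by (simp add: differentiable_at_imp_differentiable_on psi_algebra_differentiable
        psi_algebra_iter_deriv)
  then have "compact (iter_deriv vs g ` K)"
    using assms(2) by (intro compact_continuous_image)
      (auto intro: continuous_on_subset differentiable_imp_continuous_on)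
  then have "bounded (insert 0 (iter_deriv vs g ` K))" by (simp add: compact_imp_bounded)
  moreover have "iter_deriv vs g x = 0" if "x \<notin> K" for x
  proof (rule iter_deriv_eq_0_on_open)
    show "open (- K)" using assms(2) by (simp add: compact_imp_closed open_Compl)
  qed (use assms(3) that in auto)
  then have "range (iter_deriv vs g) \<subseteq> insert 0 (iter_deriv vs g ` K)" by auto
  ultimately show ?thesis by (rule bounded_subset)
qed

lemma psi_bump_in_psi_algebra: "(\<lambda>z. - psi n (r\<^sup>2 - (dist z c)\<^sup>2)) \<in> psi_algebra"
proof -
  have dist_sq: "(dist z c)\<^sup>2 = z \<bullet> z - 2 * (z \<bullet> c) + c \<bullet> c" for z
    by (simp add: dist_norm power2_norm_eq_inner inner_diff inner_commute)
  have "(\<lambda>z. - psi n (r\<^sup>2 - (dist z c)\<^sup>2))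
      = (\<lambda>z. (- 1) * psi n ((r\<^sup>2 - c \<bullet> c) + (- 1) * (z \<bullet> z + (- 2) * (z \<bullet> c))))"
    by (simp only: dist_sq) (simp add: algebra_simps)
  also have "\<dots> \<in> psi_algebra"
    by (intro psi_algebra.intros)
  finally show ?thesis .
qed

section \<open>Series with geometrically dominated derivatives\<close>

definition geometrically_dominated :: "(nat \<Rightarrow> 'a::euclidean_space \<Rightarrow> real) \<Rightarrow> bool" where
  "geometrically_dominated b \<longleftrightarrow>
     (\<forall>k vs x. set vs \<subseteq> Basis \<and> length vs \<le> k \<longrightarrow> \<bar>iter_deriv vs (b k) x\<bar> \<le> (1/2)^k)"

lemma geometrically_dominated_tail:
  assumes "geometrically_dominated b" "set vs \<subseteq> Basis" "length vs \<le> n"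
  shows "summable (\<lambda>k. iter_deriv vs (b k) x)"
    and "\<bar>(\<Sum>k. iter_deriv vs (b k) x) - (\<Sum>k<n. iter_deriv vs (b k) x)\<bar> \<le> 2 * (1/2)^n"
proof -
  have "\<forall>k\<ge>length vs. \<bar>iter_deriv vs (b k) x\<bar> \<le> (1/2)^k"
    using assms(1,2) unfolding geometrically_dominated_def by blast
  from summable_and_tail_le_half_pow[OF this assms(3)]
  show "summable (\<lambda>k. iter_deriv vs (b k) x)"
    and "\<bar>(\<Sum>k. iter_deriv vs (b k) x) - (\<Sum>k<n. iter_deriv vs (b k) x)\<bar> \<le> 2 * (1/2)^n" .
qed

lemma geometrically_dominated_derivative_tail:
  fixes b :: "nat \<Rightarrow> 'a::euclidean_space \<Rightarrow> real"
  assumes b: "geometrically_dominated b" and vs: "set vs \<subseteq> Basis" and "length vs < n"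
  shows "\<bar>(\<Sum>k<n. \<Sum>i\<in>Basis. (h \<bullet> i) * iter_deriv (i # vs) (b k) x)
            - (\<Sum>i\<in>Basis. (h \<bullet> i) * (\<Sum>k. iter_deriv (i # vs) (b k) x))\<bar>
         \<le> DIM('a) * (2 * (1/2)^n) * norm h"
proof -
  define d where "d i = (\<Sum>k<n. iter_deriv (i # vs) (b k) x) - (\<Sum>k. iter_deriv (i # vs) (b k) x)"
    for i
  have "(\<Sum>k<n. \<Sum>i\<in>Basis. (h \<bullet> i) * iter_deriv (i # vs) (b k) x)
      - (\<Sum>i\<in>Basis. (h \<bullet> i) * (\<Sum>k. iter_deriv (i # vs) (b k) x)) = (\<Sum>i\<in>Basis. (h \<bullet> i) * d i)"
    unfolding d_def
    by (simp add: sum.swap[of _ "{..<n}"] sum_distrib_left sum_subtractf right_diff_distrib)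
  moreover have "\<bar>d i\<bar> \<le> 2 * (1/2)^n" if "i \<in> Basis" for i
  proof -
    have "set (i # vs) \<subseteq> Basis" "length (i # vs) \<le> n" using vs \<open>i \<in> Basis\<close> \<open>length vs < n\<close> by auto
    from geometrically_dominated_tail(2)[OF b this] show ?thesis
      unfolding d_def by (simp only: abs_minus_commute)
  qed
  ultimately show ?thesis
    using abs_sum_Basis_inner_mult_le[of d "2 * (1/2)^n" h] by simp
qed

lemma geometrically_dominated_series_has_derivative:
  fixes b :: "nat \<Rightarrow> 'a::euclidean_space \<Rightarrow> real"
  assumes b: "\<forall>k. b k \<in> psi_algebra" "geometrically_dominated b" and vs: "set vs \<subseteq> Basis"
  shows "((\<lambda>x. \<Sum>k. iter_deriv vs (b k) x) has_derivative
           (\<lambda>h. \<Sum>i\<in>Basis. (h \<bullet> i) * (\<Sum>k. iter_deriv (i # vs) (b k) x))) (at x)"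
proof -
  define f' where "f' k x h = (\<Sum>i\<in>Basis. (h \<bullet> i) * iter_deriv (i # vs) (b k) x)" for k x h
  define g' where "g' x h = (\<Sum>i\<in>Basis. (h \<bullet> i) * (\<Sum>k. iter_deriv (i # vs) (b k) x))" for x h
  have "\<exists>g. \<forall>x\<in>UNIV. (\<lambda>k. iter_deriv vs (b k) x) sums g x \<and> (g has_derivative g' x) (at x within UNIV)"
  proof (rule has_derivative_series[where f' = f'])
    show "(iter_deriv vs (b k) has_derivative f' k x) (at x within UNIV)" for k x
    proof -
      have "iter_deriv vs (b k) \<in> psi_algebra" using b(1) psi_algebra_iter_deriv by blast
      then show ?thesis
        unfolding f'_def using has_derivative_basis_expansion[OF psi_algebra_differentiable] by simp
    qed
    show "(\<lambda>k. iter_deriv vs (b k) x) sums (\<Sum>k. iter_deriv vs (b k) x)"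
      using geometrically_dominated_tail(1)[OF b(2) vs order_refl] by (simp add: summable_sums)
  next
    fix e :: real assume "e > 0"
    have "((\<lambda>n. DIM('a) * (2 * (1/2::real)^n)) \<longlongrightarrow> 0) sequentially"
      by (intro tendsto_mult_right_zero LIMSEQ_power_zero) simp
    then have "\<forall>\<^sub>F n in sequentially. DIM('a) * (2 * (1/2::real)^n) < e"
      using \<open>e > 0\<close> by (simp add: order_tendsto_iff)
    moreover have "\<forall>\<^sub>F n in sequentially. length vs < n" by (rule eventually_gt_at_top)
    ultimately show "\<forall>\<^sub>F n in sequentially. \<forall>x\<in>UNIV. \<forall>h. norm ((\<Sum>k<n. f' k x h) - g' x h) \<le> e * norm h"
    proof eventually_elim
      case (elim n)
      have "norm ((\<Sum>k<n. f' k x h) - g' x h) \<le> e * norm h" for x h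
      proof -
        have "norm ((\<Sum>k<n. f' k x h) - g' x h) \<le> DIM('a) * (2 * (1/2)^n) * norm h"
          unfolding f'_def g'_def real_norm_def
          using geometrically_dominated_derivative_tail[OF b(2) vs elim(2)] .
        also have "\<dots> \<le> e * norm h"
          using elim(1) by (simp add: mult_right_mono)
        finally show ?thesis .
      qed
      then show ?case by simp
    qed
  qed auto
  then obtain g where g: "\<forall>x. (\<lambda>k. iter_deriv vs (b k) x) sums g x \<and> (g has_derivative g' x) (at x)"
    by auto
  then have "g = (\<lambda>x. \<Sum>k. iter_deriv vs (b k) x)" by (metis sums_unique)
  with g show ?thesis unfolding g'_def by simp
qed

lemma geometrically_dominated_series_smooth:
  fixes b :: "nat \<Rightarrow> 'a::euclidean_space \<Rightarrow> real"
  assumes b: "\<forall>k. b k \<in> psi_algebra" "geometrically_dominated b"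
  shows "smooth_on UNIV (\<lambda>x. \<Sum>k. b k x)"
proof -
  have iter_deriv_series: "iter_deriv vs (\<lambda>x. \<Sum>k. b k x) = (\<lambda>x. \<Sum>k. iter_deriv vs (b k) x)"
    if "set vs \<subseteq> Basis" for vs
    using that
  proof (induction vs)
    case Nil then show ?case by simp
  next
    case (Cons v vs)
    have v: "v \<in> Basis" and vs: "set vs \<subseteq> Basis" using Cons.prems by auto
    have "frechet_derivative (\<lambda>x. \<Sum>k. iter_deriv vs (b k) x) (at x) v
        = (\<Sum>i\<in>Basis. (v \<bullet> i) * (\<Sum>k. iter_deriv (i # vs) (b k) x))" for x
      using frechet_derivative_at[OF geometrically_dominated_series_has_derivative[OF b vs], symmetric]
      by simp
    moreover have "(\<Sum>i\<in>Basis. (v \<bullet> i) * (\<Sum>k. iter_deriv (i # vs) (b k) x))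
        = (\<Sum>k. iter_deriv (v # vs) (b k) x)" for x
    proof -
      have "(\<Sum>i\<in>Basis. (v \<bullet> i) * (\<Sum>k. iter_deriv (i # vs) (b k) x))
          = (\<Sum>i\<in>Basis. if i = v then (\<Sum>k. iter_deriv (i # vs) (b k) x) else 0)"
        by (rule sum.cong) (use v in \<open>auto simp: inner_Basis\<close>)
      then show ?thesis using v by simp
    qed
    ultimately show ?case using Cons.IH[OF vs] by simp
  qed
  show ?thesis
    unfolding smooth_on_def
  proof (intro conjI allI impI open_UNIV)
    fix vs :: "'a list" assume vs: "set vs \<subseteq> Basis"
    show "iter_deriv vs (\<lambda>x. \<Sum>k. b k x) differentiable_on UNIV"
      unfolding iter_deriv_series[OF vs] differentiable_on_def differentiable_def
      using geometrically_dominated_series_has_derivative[OF b vs] by blast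
  qed
qed

lemma exists_geometrically_dominated_scaling:
  fixes \<beta> :: "nat \<Rightarrow> 'a::euclidean_space \<Rightarrow> real"
  assumes "\<forall>k. \<beta> k \<in> psi_algebra" "\<forall>k. compact (K k)" "\<forall>k x. x \<notin> K k \<longrightarrow> \<beta> k x = 0"
  shows "\<exists>a. (\<forall>k. a k > 0) \<and> geometrically_dominated (\<lambda>k x. a k * \<beta> k x)"
proof -
  have "\<exists>B. \<forall>vs x. set vs \<subseteq> Basis \<and> length vs \<le> k \<longrightarrow> \<bar>iter_deriv vs (\<beta> k) x\<bar> \<le> B" for k
  proof -
    let ?L = "{vs. set vs \<subseteq> (Basis :: 'a set) \<and> length vs \<le> k}"
    have "finite ?L" by (rule finite_lists_length_le) simp
    moreover have "bounded (range (iter_deriv vs (\<beta> k)))" for vs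
      using psi_algebra_iter_deriv_bounded[of "\<beta> k" "K k"] assms by blast
    ultimately have "bounded (\<Union>vs\<in>?L. range (iter_deriv vs (\<beta> k)))" by blast
    then show ?thesis unfolding bounded_iff by auto
  qed
  then obtain B where B: "\<And>k vs x. set vs \<subseteq> Basis \<Longrightarrow> length vs \<le> k \<Longrightarrow> \<bar>iter_deriv vs (\<beta> k) x\<bar> \<le> B k"
    by metis
  define a where "a k = (1/2::real)^k / (1 + \<bar>B k\<bar>)" for k
  have a: "a k > 0" for k by (simp add: a_def add_pos_nonneg)
  have "\<bar>iter_deriv vs (\<lambda>x. a k * \<beta> k x) x\<bar> \<le> (1/2)^k"
    if "set vs \<subseteq> Basis" "length vs \<le> k" for k vs x
  proof -
    have "iter_deriv vs (\<lambda>x. a k * \<beta> k x) = (\<lambda>x. a k * iter_deriv vs (\<beta> k) x)"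
      using iter_deriv_const_mult assms(1) by blast
    then have "\<bar>iter_deriv vs (\<lambda>x. a k * \<beta> k x) x\<bar> = a k * \<bar>iter_deriv vs (\<beta> k) x\<bar>"
      using a[of k] by (simp add: abs_mult)
    also have "\<dots> \<le> a k * (1 + \<bar>B k\<bar>)"
      using B[OF that, of x] a[of k] by (intro mult_left_mono) auto
    also have "\<dots> = (1/2)^k" by (simp add: a_def add_pos_nonneg)
    finally show ?thesis .
  qed
  with a show ?thesis unfolding geometrically_dominated_def by blast
qed

lemma exists_smooth_zero_on_closed_neg_on_seq:
  fixes C :: "'a::euclidean_space set" and x :: "nat \<Rightarrow> 'a"
  assumes "closed C" "\<forall>k. x k \<notin> C"
  shows "\<exists>f :: 'a \<Rightarrow> real. smooth_on UNIV f \<and> (\<forall>z\<in>C. f z = 0) \<and> (\<forall>k. f (x k) < 0)"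
proof -
  have "\<exists>r>0. ball (x k) r \<subseteq> - C" for k
    using assms open_contains_ball by (metis ComplI open_Compl)
  then obtain r where r: "\<And>k. r k > 0" "\<And>k. ball (x k) (r k) \<subseteq> - C" by metis
  define \<beta> where "\<beta> k z = - psi 0 ((r k)\<^sup>2 - (dist z (x k))\<^sup>2)" for k z
  have \<beta>: "\<beta> k \<in> psi_algebra" for k
    unfolding \<beta>_def by (rule psi_bump_in_psi_algebra)
  have \<beta>_outside: "\<beta> k z = 0" if "z \<notin> ball (x k) (r k)" for k z
  proof -
    have "(r k)\<^sup>2 \<le> (dist z (x k))\<^sup>2"
      using that r(1)[of k] by (simp add: dist_commute power_mono less_imp_le)
    then show ?thesis by (simp add: \<beta>_def psi_def)
  qed
  have \<beta>_nonpos: "\<beta> k z \<le> 0" for k z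
    by (simp add: \<beta>_def psi_def)
  have \<beta>_centre: "\<beta> k (x k) < 0" for k
    using r(1)[of k] by (simp add: \<beta>_def psi_def)
  obtain a where a: "\<forall>k. a k > 0" and dominated: "geometrically_dominated (\<lambda>k z. a k * \<beta> k z)"
  proof (rule exists_geometrically_dominated_scaling[of \<beta> "\<lambda>k. cball (x k) (r k)", THEN exE])
    show "\<forall>k. \<beta> k \<in> psi_algebra" using \<beta> by blast
  qed (use \<beta>_outside in auto)
  define f where "f z = (\<Sum>k. a k * \<beta> k z)" for z
  have "smooth_on UNIV f"
    unfolding f_def[abs_def] using dominated
    by (intro geometrically_dominated_series_smooth allI psi_algebra.mult psi_algebra.const \<beta>)
  moreover have "f z = 0" if "z \<in> C" for z
  proof -
    have "\<beta> k z = 0" for k using that r(2) \<beta>_outside by blast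
    then show ?thesis by (simp add: f_def)
  qed
  moreover have "f (x k) < 0" for k
  proof -
    have summable: "summable (\<lambda>j. - (a j * \<beta> j (x k)))"
      using geometrically_dominated_tail(1)[OF dominated, of "[]" 0] summable_minus by force
    have "(\<Sum>j\<in>{k}. - (a j * \<beta> j (x k))) \<le> (\<Sum>j. - (a j * \<beta> j (x k)))"
      by (rule sum_le_suminf[OF summable])
        (use a \<beta>_nonpos in \<open>auto simp: mult_nonneg_nonpos less_imp_le\<close>)
    moreover have "(\<Sum>j. - (a j * \<beta> j (x k))) = - f (x k)"
      unfolding f_def using suminf_minus summable summable_minus_iff by fastforce
    moreover have "a k * \<beta> k (x k) < 0"
      using a \<beta>_centre by (simp add: mult_pos_neg)
    ultimately show ?thesis by simp
  qed
  ultimately show ?thesis by blast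
qed

section \<open>Openness of a smooth lift and local minima\<close>

lemma smooth_atlas_chartD:
  assumes "smooth_atlas A" "(U, \<psi>) \<in> A"
  shows "open U" "open (\<psi> ` U)" "inj_on \<psi> U" "continuous_on U \<psi>" "continuous_on (\<psi> ` U) (inv_into U \<psi>)"
proof -
  have "\<forall>(U, \<psi>)\<in>A. open U \<and> open (\<psi> ` U) \<and> inj_on \<psi> U \<and> continuous_on U \<psi>
      \<and> continuous_on (\<psi> ` U) (inv_into U \<psi>)"
    using assms(1) unfolding smooth_atlas_def by (elim conjE)
  from bspec[OF this assms(2)]
  show "open U" "open (\<psi> ` U)" "inj_on \<psi> U" "continuous_on U \<psi>" "continuous_on (\<psi> ` U) (inv_into U \<psi>)"
    by simp_all
qed

lemma smooth_atlas_covers: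
  assumes "smooth_atlas A"
  obtains U \<psi> where "(U, \<psi>) \<in> A" "y \<in> U"
proof -
  have "\<Union>(fst ` A) = UNIV" using assms unfolding smooth_atlas_def by (elim conjE)
  then obtain p where "p \<in> A" "y \<in> fst p" by blast
  then show ?thesis using that by (metis prod.collapse)
qed

lemma smooth_map_continuous:
  fixes A :: "('m::topological_space set \<times> ('m \<Rightarrow> 'a::euclidean_space)) set"
    and \<phi> :: "'m \<Rightarrow> 'e::euclidean_space"
  assumes "smooth_atlas A" "smooth_map A \<phi>"
  shows "continuous_on UNIV \<phi>"
proof -
  have "continuous_on U \<phi>" if chart: "(U, \<psi>) \<in> A" for U \<psi>
  proof -
    have "smooth_on (\<psi> ` U) (\<phi> \<circ> inv_into U \<psi>)"
      using assms(2) chart unfolding smooth_map_def by fastforce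
    then have "continuous_on (\<psi> ` U) (\<phi> \<circ> inv_into U \<psi>)"
      by (rule smooth_on_imp_continuous_on)
    then have "continuous_on U ((\<phi> \<circ> inv_into U \<psi>) \<circ> \<psi>)"
      by (rule continuous_on_compose[OF smooth_atlas_chartD(4)[OF assms(1) chart]])
    moreover have "((\<phi> \<circ> inv_into U \<psi>) \<circ> \<psi>) z = \<phi> z" if "z \<in> U" for z
      using that smooth_atlas_chartD(3)[OF assms(1) chart] by simp
    ultimately show ?thesis using continuous_on_cong by blast
  qed
  then have "continuous_on (\<Union>p\<in>A. fst p) \<phi>"
    using smooth_atlas_chartD(1)[OF assms(1)] by (intro continuous_on_open_UN) auto
  then show ?thesis using assms(1) unfolding smooth_atlas_def by simp
qed

lemma smooth_atlas_locally_compact: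
  fixes A :: "('m::topological_space set \<times> ('m \<Rightarrow> 'a::euclidean_space)) set" and y :: 'm
  assumes "smooth_atlas A" "open U" "y \<in> U"
  shows "\<exists>K. compact K \<and> y \<in> interior K \<and> K \<subseteq> U"
proof -
  obtain U0 \<psi> where chart: "(U0, \<psi>) \<in> A" "y \<in> U0"
    using smooth_atlas_covers[OF assms(1), of y] by blast
  note U0 = smooth_atlas_chartD[OF assms(1) chart(1)]
  let ?\<psi>' = "inv_into U0 \<psi>"
  let ?O = "?\<psi>' -` (U \<inter> U0) \<inter> \<psi> ` U0"
  have "open ?O"
    using continuous_on_open_vimage[OF U0(2), THEN iffD1, OF U0(5), rule_format, OF open_Int[OF assms(2) U0(1)]] .
  moreover have "\<psi> y \<in> ?O"
    using chart(2) assms(3) inv_into_f_f[OF U0(3) chart(2)] by simp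
  ultimately obtain \<epsilon> where \<epsilon>: "\<epsilon> > 0" "cball (\<psi> y) \<epsilon> \<subseteq> ?O"
    using open_contains_cball by blast
  define K where "K = ?\<psi>' ` cball (\<psi> y) \<epsilon>"
  have "compact K"
    unfolding K_def using \<epsilon>(2)
    by (intro compact_continuous_image continuous_on_subset[OF U0(5)] compact_cball) blast
  moreover have "K \<subseteq> U" unfolding K_def using \<epsilon>(2) by blast
  moreover have "y \<in> interior K"
  proof (rule interiorI)
    show "open (\<psi> -` ball (\<psi> y) \<epsilon> \<inter> U0)"
      using continuous_on_open_vimage[OF U0(1), THEN iffD1, OF U0(4), rule_format, OF open_ball] .
    show "y \<in> \<psi> -` ball (\<psi> y) \<epsilon> \<inter> U0" using chart(2) \<epsilon>(1) by simp
    show "\<psi> -` ball (\<psi> y) \<epsilon> \<inter> U0 \<subseteq> K"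
    proof
      fix z assume z: "z \<in> \<psi> -` ball (\<psi> y) \<epsilon> \<inter> U0"
      then have "z = ?\<psi>' (\<psi> z)" using U0(3) by simp
      moreover have "\<psi> z \<in> cball (\<psi> y) \<epsilon>" using z by simp
      ultimately show "z \<in> K" unfolding K_def by blast
    qed
  qed
  ultimately show ?thesis by blast
qed

lemma open_at_imp_local_to_local:
  fixes \<phi> :: "'m::topological_space \<Rightarrow> 'e::topological_space"
  assumes "open_at \<phi> y"
  shows "local_to_local \<phi> y"
  unfolding local_to_local_def
proof (intro allI impI)
  fix f :: "'e \<Rightarrow> real"
  assume "local_min_M (f \<circ> \<phi>) y"
  then obtain U where U: "open U" "y \<in> U" "\<forall>z\<in>U. f (\<phi> y) \<le> f (\<phi> z)"
    unfolding local_min_M_def by auto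
  then obtain V where V: "open V" "\<phi> y \<in> V" "V \<inter> range \<phi> \<subseteq> \<phi> ` U"
    using assms unfolding open_at_def by (meson order_refl)
  have "f (\<phi> y) \<le> f z" if z: "z \<in> range \<phi> \<inter> V" for z
  proof -
    obtain u where "u \<in> U" "z = \<phi> u" using z V(3) by blast
    then show ?thesis using U(3) by simp
  qed
  then show "local_min_on (range \<phi>) f (\<phi> y)"
    unfolding local_min_on_def using V(1,2) by blast
qed

lemma not_open_at_imp_closure_outside_image:
  assumes "\<not> open_at \<phi> y"
  obtains U where "open U" "y \<in> U" "\<phi> y \<in> closure (range \<phi> - \<phi> ` U)"
proof -
  obtain N where "\<exists>U. open U \<and> y \<in> U \<and> U \<subseteq> N"
    and not_nhd: "\<not> (\<exists>V. open V \<and> \<phi> y \<in> V \<and> V \<inter> range \<phi> \<subseteq> \<phi> ` N)"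
    using assms unfolding open_at_def by blast
  from this(1) obtain U where U: "open U" "y \<in> U" "U \<subseteq> N" by blast
  have "\<phi> y \<in> closure (range \<phi> - \<phi> ` U)"
    unfolding closure_iff_nhds_not_empty
  proof (intro allI impI)
    fix S V assume "V \<subseteq> S" "open V" "\<phi> y \<in> V"
    then have "\<not> V \<inter> range \<phi> \<subseteq> \<phi> ` N" using not_nhd by blast
    with \<open>V \<subseteq> S\<close> U(3) show "(range \<phi> - \<phi> ` U) \<inter> S \<noteq> {}" by blast
  qed
  with U(1,2) show ?thesis using that by blast
qed

lemma not_open_at_imp_smooth_counterexample:
  fixes \<phi> :: "'m::topological_space \<Rightarrow> 'e::euclidean_space"
  assumes cont: "continuous_on UNIV \<phi>"
    and locally_compact: "\<And>U (z :: 'm). open U \<Longrightarrow> z \<in> U \<Longrightarrow> \<exists>K. compact K \<and> z \<in> interior K \<and> K \<subseteq> U"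
    and "\<not> open_at \<phi> y"
  shows "\<exists>f :: 'e \<Rightarrow> real. smooth_on UNIV f \<and> local_min_M (f \<circ> \<phi>) y \<and> \<not> local_min_on (range \<phi>) f (\<phi> y)"
proof -
  obtain U where U: "open U" "y \<in> U" "\<phi> y \<in> closure (range \<phi> - \<phi> ` U)"
    using not_open_at_imp_closure_outside_image[OF assms(3)] .
  obtain K where K: "compact K" "y \<in> interior K" "K \<subseteq> U" using locally_compact[OF U(1,2)] by blast
  have "closed (\<phi> ` K)"
    using K(1) cont by (meson compact_continuous_image compact_imp_closed continuous_on_subset subset_UNIV)
  from U(3) obtain xs where xs: "\<And>k. xs k \<in> range \<phi> - \<phi> ` U" "xs \<longlonglongrightarrow> \<phi> y"
    unfolding closure_sequential by blast
  have "\<forall>k. xs k \<notin> \<phi> ` K" using xs(1) K(3) by blast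
  from exists_smooth_zero_on_closed_neg_on_seq[OF \<open>closed (\<phi> ` K)\<close> this]
  obtain f :: "'e \<Rightarrow> real" where f: "smooth_on UNIV f" "\<forall>z\<in>\<phi> ` K. f z = 0" "\<forall>k. f (xs k) < 0"
    by blast
  have f_K: "f (\<phi> z) = 0" if "z \<in> interior K" for z
    using that interior_subset f(2) by blast
  have "local_min_M (f \<circ> \<phi>) y"
    unfolding local_min_M_def using K(2) f_K by (intro exI[of _ "interior K"]) auto
  moreover have "\<not> local_min_on (range \<phi>) f (\<phi> y)"
  proof
    assume "local_min_on (range \<phi>) f (\<phi> y)"
    then obtain V where V: "open V" "\<phi> y \<in> V" "\<forall>z\<in>range \<phi> \<inter> V. f (\<phi> y) \<le> f z"
      unfolding local_min_on_def by blast
    from topological_tendstoD[OF xs(2) V(1,2)] obtain k where "xs k \<in> V"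
      by (auto simp: eventually_sequentially)
    then have "f (\<phi> y) \<le> f (xs k)" using V(3) xs(1) by blast
    then show False using f(3) f_K[OF K(2)] by (metis not_less)
  qed
  ultimately show ?thesis using f(1) by blast
qed

theorem theorem2p3:
  fixes A :: "('m::{t2_space, second_countable_topology} set \<times> ('m \<Rightarrow> 'a::euclidean_space)) set"
    and \<phi> :: "'m \<Rightarrow> 'e::euclidean_space"
    and y :: 'm
  assumes "smooth_atlas A"
    and "smooth_map A \<phi>"
  shows "(local_to_local \<phi> y \<longleftrightarrow> open_at \<phi> y) \<and>
         (\<not> local_to_local \<phi> y \<longrightarrow>
            (\<exists>f :: 'e \<Rightarrow> real. smooth_on UNIV f \<and> local_min_M (f \<circ> \<phi>) y
                \<and> \<not> local_min_on (range \<phi>) f (\<phi> y)))"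
proof -
  have counterexample: "\<exists>f :: 'e \<Rightarrow> real. smooth_on UNIV f \<and> local_min_M (f \<circ> \<phi>) y
      \<and> \<not> local_min_on (range \<phi>) f (\<phi> y)" if "\<not> open_at \<phi> y"
    using not_open_at_imp_smooth_counterexample[OF smooth_map_continuous[OF assms]
        smooth_atlas_locally_compact[OF assms(1)] that] .
  have "open_at \<phi> y" if "local_to_local \<phi> y"
  proof (rule ccontr)
    assume "\<not> open_at \<phi> y"
    then obtain f :: "'e \<Rightarrow> real" where f: "smooth_on UNIV f" "local_min_M (f \<circ> \<phi>) y"
      "\<not> local_min_on (range \<phi>) f (\<phi> y)" using counterexample by blast
    have "continuous_on (range \<phi>) f"
      using smooth_on_imp_continuous_on[OF f(1)] continuous_on_subset by blast
    with that f(2,3) show False unfolding local_to_local_def by blast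
  qed
  then show ?thesis using open_at_imp_local_to_local counterexample by blast
qed

end
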